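(* Let $\Sigma$ be a $(\mathbf d,\mathbf z)$-cluster pattern with principal coefficients. Then every $y$-variable $y^t_i\in\mathrm{Trop}(\mathbf y,\mathbf z)$ of $\Sigma$ is a Laurent monomial in $y_1,\dots,y_n$ alone (with coefficient $1$), i.e. none of the variables $z_{i,s}$ occurs in it.
   Context: $[a]_+=\max(a,0)$. Mutation data: positive integers $\mathbf d=(d_1,\dots,d_n)$ and frozen coefficients $z_{i,s}$ ($1\le s\le d_i-1$) with $z_{i,s}=z_{i,d_i-s}$, $z_{i,0}=z_{i,d_i}=1$. Regard $y_1,\dots,y_n$ and the $z_{i,s}$ as formal variables; $\mathrm{Trop}(\mathbf y,\mathbf z)$ is the free abelian multiplicative group they generate with $\oplus$ given by componentwise minimum of exponents. The $(\mathbf d,\mathbf z)$-mutation at $k$ acts on a skew-symmetrizable exchange matrix $B=(b_{ij})$ and $y$-variables by: $b'_{ij}=-b_{ij}$ if $i=k$ or $j=k$, else $b'_{ij}=b_{ij}+d_k([-b_{ik}]_+b_{kj}+b_{ik}[b_{kj}]_+)$; $y'_k=y_k^{-1}$, $y'_i=y_i(y_k^{[\varepsilon b_{ki}]_+})^{d_k}(\bigoplus_{s=0}^{d_k}z_{k,s}y_k^{\varepsilon s})^{-b_{ki}}$ ($i\neq k$), $\varepsilon\in\{\pm1\}$ (cluster variables also mutate, irrelevant here). $\mathbb T_n$ is the $n$-regular tree with edges labeled $1,\dots,n$, distinct labels at each vertex. A $(\mathbf d,\mathbf z)$-cluster pattern with principal coefficients assigns to each vertex $t$ a seed $(\mathbf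 x_t,\mathbf y_t,B_t)$, $\mathbf y_t=(y^t_1,\dots,y^t_n)\in\mathrm{Trop}(\mathbf y,\mathbf z)^n$, such that seeds at vertices joined by an edge labeled $k$ are related by the mutation at $k$, and the seed at a fixed initial vertex $t_0$ has $y$-variables the generators $y_1,\dots,y_n$ (initial cluster and skew-symmetrizable $B$ arbitrary). *)

theory Defs
  imports Main
begin

text \<open>Generators of Trop(y,z): the y_j and the frozen z_{i,s}. The identification
 z_{i,s} = z_{i,d_i-s} is built in by only using canonical indices 1 <= s <= d_i - s
 (see zvar); z_{i,0} = z_{i,d_i} = 1.\<close>
datatype gen = Yg nat | Zg nat nat

text \<open>An element of the tropical semifield Trop(y,z) is represented by its exponent
 vector: multiplication is addition of exponents, semifield addition is componentwise
 minimum, inversion is negation.\<close>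
type_synonym trop = "gen \<Rightarrow> int"

definition tmul :: "trop \<Rightarrow> trop \<Rightarrow> trop" where
  "tmul a b = (\<lambda>g. a g + b g)"

definition tpow :: "trop \<Rightarrow> int \<Rightarrow> trop" where
  "tpow a m = (\<lambda>g. m * a g)"

definition tgen :: "gen \<Rightarrow> trop" where
  "tgen h = (\<lambda>g. if g = h then 1 else 0)"

definition tone :: trop where
  "tone = (\<lambda>g. 0)"

definition tsum :: "(nat \<Rightarrow> trop) \<Rightarrow> nat set \<Rightarrow> trop" where
  "tsum f S = (\<lambda>g. Min ((\<lambda>s. f s g) ` S))"

definition zvar :: "(nat \<Rightarrow> nat) \<Rightarrow> nat \<Rightarrow> nat \<Rightarrow> trop" where
  "zvar d i s = (if s = 0 \<or> s = d i then tone else tgen (Zg i (min s (d i - s))))"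

definition pos_part :: "int \<Rightarrow> int" where
  "pos_part a = max a 0"

definition mutB :: "(nat \<Rightarrow> nat) \<Rightarrow> nat \<Rightarrow> (nat \<Rightarrow> nat \<Rightarrow> int) \<Rightarrow> nat \<Rightarrow> nat \<Rightarrow> int" where
  "mutB d k B = (\<lambda>i j. if i = k \<or> j = k then - B i j
      else B i j + int (d k) * (pos_part (- B i k) * B k j + B i k * pos_part (B k j)))"

definition mutY :: "(nat \<Rightarrow> nat) \<Rightarrow> int \<Rightarrow> nat \<Rightarrow> (nat \<Rightarrow> nat \<Rightarrow> int) \<Rightarrow> (nat \<Rightarrow> trop) \<Rightarrow> nat \<Rightarrow> trop" where
  "mutY d eps k B y = (\<lambda>i. if i = k then tpow (y k) (-1)
      else tmul (tmul (y i) (tpow (tpow (y k) (pos_part (eps * B k i))) (int (d k))))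
                (tpow (tsum (\<lambda>s. tmul (zvar d k s) (tpow (y k) (eps * int s))) {0..d k}) (- B k i)))"

definition mut_related :: "nat \<Rightarrow> (nat \<Rightarrow> nat) \<Rightarrow> nat \<Rightarrow>
     (nat \<Rightarrow> nat \<Rightarrow> int) \<Rightarrow> (nat \<Rightarrow> trop) \<Rightarrow> (nat \<Rightarrow> nat \<Rightarrow> int) \<Rightarrow> (nat \<Rightarrow> trop) \<Rightarrow> bool" where
  "mut_related n d k B y B' y' \<longleftrightarrow>
     (\<forall>i<n. \<forall>j<n. B' i j = mutB d k B i j) \<and>
     (\<exists>eps \<in> {1, -1}. \<forall>i<n. y' i = mutY d eps k B y i)"

definition skew_symmetrizable :: "nat \<Rightarrow> (nat \<Rightarrow> nat \<Rightarrow> int) \<Rightarrow> bool" where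
  "skew_symmetrizable n B \<longleftrightarrow>
     (\<exists>r :: nat \<Rightarrow> int. (\<forall>i<n. r i > 0) \<and> (\<forall>i<n. \<forall>j<n. r i * B i j = - (r j * B j i)))"

text \<open>Vertices of the n-regular tree T_n: reduced words in the labels 0..n-1
 (no two equal consecutive letters). The edges are {w, w @ [k]} labelled k, for
 w @ [k] reduced.\<close>
definition tree_vertex :: "nat \<Rightarrow> nat list \<Rightarrow> bool" where
  "tree_vertex n w \<longleftrightarrow> set w \<subseteq> {..<n} \<and> (\<forall>i. Suc i < length w \<longrightarrow> w ! i \<noteq> w ! Suc i)"

text \<open>A (d,z)-cluster pattern with principal coefficients at the initial vertex t0
 (cluster variables are omitted, they do not influence the y-pattern).\<close>
definition principal_dz_pattern :: "nat \<Rightarrow> (nat \<Rightarrow> nat) \<Rightarrow> nat list \<Rightarrow>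
     (nat list \<Rightarrow> nat \<Rightarrow> nat \<Rightarrow> int) \<Rightarrow> (nat list \<Rightarrow> nat \<Rightarrow> trop) \<Rightarrow> bool" where
  "principal_dz_pattern n d t0 Bt Yt \<longleftrightarrow>
     (\<forall>i<n. d i > 0) \<and> tree_vertex n t0 \<and>
     skew_symmetrizable n (Bt t0) \<and>
     (\<forall>i<n. Yt t0 i = tgen (Yg i)) \<and>
     (\<forall>w k. tree_vertex n (w @ [k]) \<longrightarrow>
         mut_related n d k (Bt w) (Yt w) (Bt (w @ [k])) (Yt (w @ [k])))"

end

theory Submission
  imports Defs
begin

(* Elements of Trop(y,z) are exponent vectors over the generators, so the
   claim is that for every generator g other than y_1,...,y_n the exponent of g in each
   y-variable y^t_i is 0.  Call a seed "free of g" if all its y-variables have exponent 0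
   at g.  The initial seed is free of every such g.  A mutation at k preserves freeness
   in both directions: y'_k = y_k^{-1} negates the exponent, and if y_k has exponent 0
   at g then every summand z_{k,s} y_k^{eps s} of the tropical sum has a nonnegative
   exponent at g, the s = 0 summand has exponent 0, so the tropical sum (a minimum) has
   exponent 0 and y'_i has the same exponent at g as y_i.  Induction along the reduced
   word of a vertex shows that every seed is free of g exactly when the seed at the
   root [] is; comparing t and t0 with the root gives the theorem. *)

lemma tmul_app: "tmul a b g = a g + b g"
  by (simp add: tmul_def)

lemma tpow_app: "tpow a m g = m * a g"
  by (simp add: tpow_def)

lemma tsum_eq_zero:
  assumes "finite S" "s0 \<in> S" "f s0 g = 0" "\<And>s. s \<in> S \<Longrightarrow> f s g \<ge> 0"
  shows "tsum f S g = 0"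
proof -
  have "Min ((\<lambda>s. f s g) ` S) = 0"
    using assms by (intro Min_eqI) (auto intro: image_eqI[where x = s0])
  then show ?thesis by (simp add: tsum_def)
qed

lemma zvar_nonneg: "zvar d k s g \<ge> 0"
  by (simp add: zvar_def tone_def tgen_def)

lemma zvar_zero: "zvar d k 0 g = 0"
  by (simp add: zvar_def tone_def)

lemma mutation_sum_zero:
  assumes "y k g = 0"
  shows "tsum (\<lambda>s. tmul (zvar d k s) (tpow (y k) (eps * int s))) {0..d k} g = 0"
  using assms by (intro tsum_eq_zero[of _ 0]) (simp_all add: tmul_app tpow_app zvar_zero zvar_nonneg)

lemma mutY_at_k: "mutY d eps k B y k g = - y k g"
  by (simp add: mutY_def tpow_app)

lemma mutY_away_from_k:
  assumes "y k g = 0" "i \<noteq> k"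
  shows "mutY d eps k B y i g = y i g"
  using assms mutation_sum_zero[of y k g d eps] by (simp add: mutY_def tmul_app tpow_app)

definition free_of :: "nat \<Rightarrow> (nat \<Rightarrow> trop) \<Rightarrow> gen \<Rightarrow> bool" where
  "free_of n y g \<longleftrightarrow> (\<forall>i<n. y i g = 0)"

lemma mutation_free_of_iff:
  assumes "mut_related n d k B y B' y'" "k < n"
  shows "free_of n y' g \<longleftrightarrow> free_of n y g"
proof -
  obtain eps where y': "\<And>i. i < n \<Longrightarrow> y' i = mutY d eps k B y i"
    using assms(1) unfolding mut_related_def by blast
  have yk: "y' k g = - y k g"
    using y'[OF assms(2)] by (simp add: mutY_at_k)
  have same: "y' i g = y i g" if "y k g = 0" "i < n" for i
    using that yk y' mutY_away_from_k by (cases "i = k") auto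
  show ?thesis
  proof
    assume "free_of n y' g"
    then have "y k g = 0" using yk assms(2) by (simp add: free_of_def)
    with \<open>free_of n y' g\<close> show "free_of n y g" using same by (simp add: free_of_def)
  next
    assume "free_of n y g"
    then have "y k g = 0" using assms(2) by (simp add: free_of_def)
    with \<open>free_of n y g\<close> show "free_of n y' g" using same by (simp add: free_of_def)
  qed
qed

lemma tree_vertex_snoc:
  assumes "tree_vertex n (w @ [k])"
  shows "tree_vertex n w" "k < n"
proof -
  have "w ! i \<noteq> w ! Suc i" if "Suc i < length w" for i
    using assms that unfolding tree_vertex_def
    by (metis length_append_singleton less_SucI nth_append_left Suc_lessD)
  then show "tree_vertex n w" using assms unfolding tree_vertex_def by auto
  show "k < n" using assms unfolding tree_vertex_def by auto
qed

lemma pattern_free_of_iff_root: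
  assumes "principal_dz_pattern n d t0 Bt Yt" "tree_vertex n w"
  shows "free_of n (Yt w) g \<longleftrightarrow> free_of n (Yt []) g"
  using assms(2)
proof (induction w rule: rev_induct)
  case Nil
  then show ?case by simp
next
  case (snoc k w)
  have "mut_related n d k (Bt w) (Yt w) (Bt (w @ [k])) (Yt (w @ [k]))"
    using assms(1) snoc.prems unfolding principal_dz_pattern_def by blast
  with tree_vertex_snoc[OF snoc.prems] snoc.IH show ?case
    using mutation_free_of_iff by blast
qed

theorem mainTheorem5:
  assumes "principal_dz_pattern n d t0 Bt Yt"
      and "tree_vertex n t"
      and "i < n"
  shows "\<forall>g. Yt t i g \<noteq> 0 \<longrightarrow> (\<exists>j<n. g = Yg j)"
proof (intro allI impI)
  fix g assume nonzero: "Yt t i g \<noteq> 0"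
  show "\<exists>j<n. g = Yg j"
  proof (rule ccontr)
    assume not_y: "\<not> (\<exists>j<n. g = Yg j)"
    have "free_of n (Yt t0) g"
      using assms(1) not_y unfolding principal_dz_pattern_def free_of_def by (auto simp: tgen_def)
    moreover have "tree_vertex n t0"
      using assms(1) unfolding principal_dz_pattern_def by blast
    ultimately have "free_of n (Yt t) g"
      using pattern_free_of_iff_root[OF assms(1)] assms(2) by blast
    with nonzero assms(3) show False by (simp add: free_of_def)
  qed
qed

end
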